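(* Let $A$ be a unique factorization domain and $B$ a commutative ring containing $A$ as a subring, such that $B$ is a flat and torsion-free $A$-module and $A^*=A\cap B^*$. Then, inside the ring $A_*^{-1}B$ (which contains both $B$ and the fraction field $A_*^{-1}A$ of $A$), one has $B\cap (A_*^{-1}A)=A$; equivalently, the $A$-module $B/A$ is torsion free.
   Context: For a ring $R$, $R^*$ denotes its group of units and $R_*=R\setminus\{0\}$; $A_*^{-1}A$ is the field of fractions of $A$. *)

theory Defs
  imports "HOL-Algebra.Algebra"
begin

text \<open>Throughout, B is a commutative ring (HOL-Algebra record) and A a subset of its
carrier which is a subring; B is regarded as an A-module via the multiplication of B.\<close>

definition torsion_free_over :: "'a set \<Rightarrow> ('a, 'b) ring_scheme \<Rightarrow> bool" where
  "torsion_free_over A B \<longleftrightarrow>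
     (\<forall>s \<in> A. \<forall>b \<in> carrier B. s \<noteq> \<zero>\<^bsub>B\<^esub> \<longrightarrow> s \<otimes>\<^bsub>B\<^esub> b = \<zero>\<^bsub>B\<^esub> \<longrightarrow> b = \<zero>\<^bsub>B\<^esub>)"

text \<open>Flatness of B as an A-module, via the equational criterion (every A-linear relation
among elements of B is trivial, i.e. comes from relations in A).\<close>

definition flat_over :: "'a set \<Rightarrow> ('a, 'b) ring_scheme \<Rightarrow> bool" where
  "flat_over A B \<longleftrightarrow>
     (\<forall>(n::nat) a b. (\<forall>i<n. a i \<in> A) \<longrightarrow> (\<forall>i<n. b i \<in> carrier B) \<longrightarrow>
        finsum B (\<lambda>i. a i \<otimes>\<^bsub>B\<^esub> b i) {..<n} = \<zero>\<^bsub>B\<^esub> \<longrightarrow>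
        (\<exists>(m::nat) c y. (\<forall>i<n. \<forall>j<m. c i j \<in> A) \<and> (\<forall>j<m. y j \<in> carrier B) \<and>
           (\<forall>i<n. b i = finsum B (\<lambda>j. c i j \<otimes>\<^bsub>B\<^esub> y j) {..<m}) \<and>
           (\<forall>j<m. finsum B (\<lambda>i. a i \<otimes>\<^bsub>B\<^esub> c i j) {..<n} = \<zero>\<^bsub>B\<^esub>)))"

end

theory Submission
  imports Defs
begin

(* Factor s into primes of A and cancel them one at a time, so it suffices to show that
   p b in A forces b in A for a prime p of A. Put a = p b. If p divides a in A, this is
   torsion-freeness. Otherwise the equational criterion of flatness, applied to the relation
   a 1 = p b, writes 1 = sum_j c_j z_j with a c_j = p d_j in A; primality puts p in every c_j,
   so p is a unit of B, hence of A, which is absurd. *)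

lemma (in factorial_domain) exists_ring_prime_divisor:
  assumes "a \<in> carrier R - {\<zero>}" and "a \<notin> Units R"
  obtains p where "p \<in> carrier R" "ring_prime p" "p divides a"
proof -
  obtain fs where set_fs: "set fs \<subseteq> carrier (mult_of R)" and fs: "wfactors (mult_of R) fs a"
    using wfactors_exist assms by auto
  have "a \<in> Units R" if "fs = []"
    using that fs assms(1) Units_cong assoc_iff_assoc_mult unfolding wfactors_def by (simp, blast)
  then have "fs \<noteq> []"
    using assms(2) by auto
  then obtain f fs' where fs_Cons: "fs = f # fs'"
    using list.exhaust by blast
  have f: "f \<in> carrier R" "f \<noteq> \<zero>"
    using set_fs fs_Cons by auto
  have "f divides\<^bsub>mult_of R\<^esub> a"
    using mult_of.wfactors_dividesI[OF fs set_fs] assms(1) fs_Cons by auto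
  moreover have "prime (mult_of R) f"
    using fs f irreducible_prime unfolding fs_Cons wfactors_def by auto
  ultimately show thesis
    using that f prime_eq_prime_mult ring_primeI by auto
qed

lemma (in factorial_domain) prime_factor_induct [consumes 1, case_names unit prime_mult]:
  assumes "a \<in> carrier R - {\<zero>}"
    and unit: "\<And>u. u \<in> Units R \<Longrightarrow> P u"
    and prime_mult: "\<And>p a. p \<in> carrier R \<Longrightarrow> ring_prime p \<Longrightarrow> a \<in> carrier R - {\<zero>} \<Longrightarrow>
      P a \<Longrightarrow> P (p \<otimes> a)"
  shows "P a"
  using division_wellfounded assms(1)
proof (induction a rule: wf_induct_rule)
  case (less a)
  show ?case
  proof (cases "a \<in> Units R")
    case True
    then show ?thesis by (rule unit)
  next
    case False
    obtain p where p: "p \<in> carrier R" "ring_prime p" "p divides a"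
      using exists_ring_prime_divisor[OF less.prems False] by blast
    then obtain a' where a': "a' \<in> carrier R" "a = p \<otimes> a'"
      by auto
    have "a' \<noteq> \<zero>"
      using a' p(1) less.prems by auto
    moreover have "p \<notin> Units R"
      using p(2) unfolding ring_prime_def prime_def by simp
    ultimately have "properfactor (mult_of R) a' a"
      using a' p(1,2) m_comm unfolding ring_prime_def
      by (intro mult_of.properfactorI3[of a a' p]) auto
    then have "P a'"
      using less.IH less.prems a' \<open>a' \<noteq> \<zero>\<close> by auto
    then show ?thesis
      using prime_mult[OF p(1,2)] a' \<open>a' \<noteq> \<zero>\<close> by auto
  qed
qed

lemma (in abelian_monoid) finsum_lessThan_2:
  assumes "f 0 \<in> carrier G" "f 1 \<in> carrier G"
  shows "(\<Oplus>i\<in>{..<2::nat}. f i) = f 0 \<oplus> f 1"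
proof -
  have "{..<2::nat} = insert 1 {0}" by auto
  then show ?thesis
    using assms by (simp add: finsum_insert a_comm)
qed

lemma flat_overD:
  fixes n :: nat
  assumes "flat_over A B" "\<forall>i<n. a i \<in> A" "\<forall>i<n. b i \<in> carrier B"
    and "finsum B (\<lambda>i. a i \<otimes>\<^bsub>B\<^esub> b i) {..<n} = \<zero>\<^bsub>B\<^esub>"
  obtains m :: nat and c y where "\<forall>i<n. \<forall>j<m. c i j \<in> A" "\<forall>j<m. y j \<in> carrier B"
    "\<forall>i<n. b i = finsum B (\<lambda>j. c i j \<otimes>\<^bsub>B\<^esub> y j) {..<m}"
    "\<forall>j<m. finsum B (\<lambda>i. a i \<otimes>\<^bsub>B\<^esub> c i j) {..<n} = \<zero>\<^bsub>B\<^esub>"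
  using assms(1)[unfolded flat_over_def, THEN spec, THEN spec, THEN spec,
      THEN mp, THEN mp, THEN mp, OF assms(2-4)] by blast

lemma (in cring) flat_over_binary_relation:
  assumes "subring A R" "flat_over A R"
    and "a \<in> A" "s \<in> A" "x \<in> carrier R" "y \<in> carrier R" "a \<otimes> x = s \<otimes> y"
  obtains m :: nat and c d z where "\<forall>j<m. c j \<in> A \<and> d j \<in> A \<and> z j \<in> carrier R"
    "x = (\<Oplus>j\<in>{..<m}. c j \<otimes> z j)" "y = (\<Oplus>j\<in>{..<m}. d j \<otimes> z j)"
    "\<forall>j<m. a \<otimes> c j = s \<otimes> d j"
proof -
  have A_carrier: "A \<subseteq> carrier R"
    using subringE(1)[OF assms(1)] .
  have a_R: "a \<in> carrier R" and s_R: "s \<in> carrier R"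
    using assms(3,4) A_carrier by auto
  define u where "u = (\<lambda>i::nat. if i = 0 then a else \<ominus> s)"
  define v where "v = (\<lambda>i::nat. if i = 0 then x else y)"
  have u: "\<forall>i<2. u i \<in> A"
    using assms(3,4) subringE(5)[OF assms(1)] unfolding u_def by auto
  have v: "\<forall>i<2. v i \<in> carrier R"
    using assms(5,6) unfolding v_def by auto
  have "(\<Oplus>i\<in>{..<2}. u i \<otimes> v i) = a \<otimes> x \<ominus> s \<otimes> y"
    using a_R s_R assms(5,6) by (simp add: finsum_lessThan_2 u_def v_def minus_eq l_minus)
  also have "\<dots> = \<zero>"
    using s_R assms(6,7) by (simp add: minus_eq r_neg)
  finally obtain m :: nat and c z where c: "\<forall>i<2. \<forall>j<m. c i j \<in> A"
    and z: "\<forall>j<m. z j \<in> carrier R"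
    and v_eq: "\<forall>i<2. v i = (\<Oplus>j\<in>{..<m}. c i j \<otimes> z j)"
    and rel: "\<forall>j<m. (\<Oplus>i\<in>{..<2}. u i \<otimes> c i j) = \<zero>"
    by (rule flat_overD[OF assms(2) u v])
  have "a \<otimes> c 0 j = s \<otimes> c 1 j" if "j < m" for j
  proof -
    have c_j: "c 0 j \<in> carrier R" "c 1 j \<in> carrier R"
      using c that A_carrier by auto
    have "a \<otimes> c 0 j \<ominus> s \<otimes> c 1 j = (\<Oplus>i\<in>{..<2}. u i \<otimes> c i j)"
      using a_R s_R c_j by (simp add: finsum_lessThan_2 u_def minus_eq l_minus)
    also have "\<dots> = \<zero>"
      using rel that by blast
    finally show ?thesis
      using a_R s_R c_j r_right_minus_eq[of "a \<otimes> c 0 j" "s \<otimes> c 1 j"] by simp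
  qed
  moreover have "x = (\<Oplus>j\<in>{..<m}. c 0 j \<otimes> z j)" "y = (\<Oplus>j\<in>{..<m}. c 1 j \<otimes> z j)"
    using v_eq[rule_format, of 0] v_eq[rule_format, of 1] unfolding v_def by simp_all
  ultimately show thesis
    using c z by (intro that[of m "c 0" "c 1" z]) auto
qed

lemma (in cring) subring_prime_mult_cancel:
  assumes "subring A R" "flat_over A R" "torsion_free_over A R"
    and p: "p \<in> A" "ring_prime\<^bsub>R\<lparr>carrier := A\<rparr>\<^esub> p" "p \<notin> Units R"
    and b: "b \<in> carrier R" "p \<otimes> b \<in> A"
  shows "b \<in> A"
proof -
  let ?A = "R\<lparr>carrier := A\<rparr>"
  have A_carrier: "A \<subseteq> carrier R"
    using subringE(1)[OF assms(1)] .
  have p_R: "p \<in> carrier R"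
    using p(1) A_carrier by auto
  have p_nonzero: "p \<noteq> \<zero>" and p_prime: "prime ?A p"
    using p(2) unfolding ring_prime_def by auto
  define a where "a = p \<otimes> b"
  have a: "a \<in> A" "a \<in> carrier R"
    using b p_R unfolding a_def by auto
  show ?thesis
  proof (cases "p divides\<^bsub>?A\<^esub> a")
    case True
    then obtain a' where a': "a' \<in> A" "a = p \<otimes> a'"
      by (auto simp: factor_def)
    have a'_R: "a' \<in> carrier R"
      using a'(1) A_carrier by auto
    have "p \<otimes> (b \<ominus> a') = p \<otimes> b \<ominus> p \<otimes> a'"
      using b(1) p_R a'_R by (simp add: r_distr minus_eq r_minus)
    also have "\<dots> = \<zero>"
      using a'(2) a(2) unfolding a_def by simp
    finally have "p \<otimes> (b \<ominus> a') = \<zero>" .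
    then have "b \<ominus> a' = \<zero>"
      using assms(3) p(1) p_nonzero b(1) a'_R unfolding torsion_free_over_def by blast
    then show ?thesis
      using a'(1) b(1) a'_R r_right_minus_eq by auto
  next
    case False
    have "a \<otimes> \<one> = p \<otimes> b"
      using a unfolding a_def by simp
    then obtain m :: nat and c d z where cdz: "\<forall>j<m. c j \<in> A \<and> d j \<in> A \<and> z j \<in> carrier R"
      and one_eq: "\<one> = (\<Oplus>j\<in>{..<m}. c j \<otimes> z j)" and rel: "\<forall>j<m. a \<otimes> c j = p \<otimes> d j"
      by (rule flat_over_binary_relation[OF assms(1,2) a(1) p(1) one_closed b(1)])
    have "\<exists>e\<in>A. c j = p \<otimes> e" if "j < m" for j
    proof -
      have "p divides\<^bsub>?A\<^esub> a \<otimes> c j"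
        using rel cdz that unfolding factor_def by auto
      then have "p divides\<^bsub>?A\<^esub> c j"
        using p_prime False a(1) cdz that unfolding prime_def by auto
      then show ?thesis
        unfolding factor_def by auto
    qed
    then obtain e where e: "\<forall>j<m. e j \<in> A \<and> c j = p \<otimes> e j"
      using choice_iff'[of "\<lambda>j. j < m" "\<lambda>j e. e \<in> A \<and> c j = p \<otimes> e"] by blast
    have "\<one> = (\<Oplus>j\<in>{..<m}. p \<otimes> (e j \<otimes> z j))"
      unfolding one_eq using e cdz p_R A_carrier
      by (intro finsum_cong') (auto simp: m_assoc)
    also have "\<dots> = p \<otimes> (\<Oplus>j\<in>{..<m}. e j \<otimes> z j)"
      using e cdz p_R A_carrier by (intro finsum_rdistr[symmetric]) auto
    finally have "p \<otimes> (\<Oplus>j\<in>{..<m}. e j \<otimes> z j) \<in> Units R"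
      using Units_one_closed by simp
    moreover have "(\<Oplus>j\<in>{..<m}. e j \<otimes> z j) \<in> carrier R"
      using e cdz A_carrier by (intro finsum_closed) auto
    ultimately have "p \<in> Units R"
      using p_R unit_factor by blast
    with p(3) show ?thesis
      by contradiction
  qed
qed

lemma (in cring) subring_unit_mult_cancel:
  assumes "subring A R" "u \<in> Units (R\<lparr>carrier := A\<rparr>)"
    and b: "b \<in> carrier R" "u \<otimes> b \<in> A"
  shows "b \<in> A"
proof -
  have A_carrier: "A \<subseteq> carrier R"
    using subringE(1)[OF assms(1)] .
  obtain v where v: "v \<in> A" "u \<in> A" "v \<otimes> u = \<one>"
    using assms(2) unfolding Units_def by auto
  moreover have "v \<in> carrier R" "u \<in> carrier R"
    using v A_carrier by auto
  ultimately have "b = v \<otimes> (u \<otimes> b)"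
    using b(1) by (simp add: m_assoc[symmetric])
  then show ?thesis
    using v(1) b(2) subringE(6)[OF assms(1)] by metis
qed

theorem mainTheorem2:
  fixes B :: "('a, 'b) ring_scheme" and A :: "'a set"
  assumes "cring B"
    and "subring A B"
    and "factorial_domain (B\<lparr>carrier := A\<rparr>)"
    and "flat_over A B"
    and "torsion_free_over A B"
    and "Units (B\<lparr>carrier := A\<rparr>) = A \<inter> Units B"
  shows "\<forall>b \<in> carrier B. \<forall>s \<in> A. s \<noteq> \<zero>\<^bsub>B\<^esub> \<longrightarrow> s \<otimes>\<^bsub>B\<^esub> b \<in> A \<longrightarrow> b \<in> A"
proof (intro ballI impI)
  interpret B: cring B by fact
  interpret A: factorial_domain "B\<lparr>carrier := A\<rparr>" by fact
  fix b s
  assume b: "b \<in> carrier B" "s \<otimes>\<^bsub>B\<^esub> b \<in> A" and "s \<in> A" "s \<noteq> \<zero>\<^bsub>B\<^esub>"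
  then have "s \<in> carrier (B\<lparr>carrier := A\<rparr>) - {\<zero>\<^bsub>B\<lparr>carrier := A\<rparr>\<^esub>}"
    by simp
  then have "\<forall>b \<in> carrier B. s \<otimes>\<^bsub>B\<^esub> b \<in> A \<longrightarrow> b \<in> A"
  proof (induction s rule: A.prime_factor_induct)
    case (unit u)
    then show ?case
      using B.subring_unit_mult_cancel[OF assms(2)] by blast
  next
    case (prime_mult p s)
    have p: "p \<in> A" "p \<in> carrier B" "p \<notin> Units B" and s: "s \<in> carrier B"
      using prime_mult.hyps assms(6) subringE(1)[OF assms(2)]
      unfolding ring_prime_def prime_def by auto
    show ?case
    proof (intro ballI impI)
      fix b
      assume b: "b \<in> carrier B" "(p \<otimes>\<^bsub>B\<lparr>carrier := A\<rparr>\<^esub> s) \<otimes>\<^bsub>B\<^esub> b \<in> A"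
      then have "p \<otimes>\<^bsub>B\<^esub> (s \<otimes>\<^bsub>B\<^esub> b) \<in> A"
        using p(2) s by (simp add: B.m_assoc)
      then have "s \<otimes>\<^bsub>B\<^esub> b \<in> A"
        using B.subring_prime_mult_cancel[OF assms(2,4,5) p(1) prime_mult.hyps(2) p(3)] b(1) s
        by simp
      with b(1) show "b \<in> A"
        using prime_mult.IH by blast
    qed
  qed
  with b show "b \<in> A"
    by blast
qed

end
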